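(* Let $N\ge1$ and $\varphi,\psi\in\mathbb{C}^N$ be such that for $k=0,\ldots,2N-2$, $$\Big|P_\varphi\Big(\tfrac{k}{2N-1}\Big)\Big|=\Big|P_\psi\Big(\tfrac{k}{2N-1}\Big)\Big|\quad\text{and}\quad\Big|P_\varphi'\Big(\tfrac{k}{2N-1}\Big)\Big|=\Big|P_\psi'\Big(\tfrac{k}{2N-1}\Big)\Big|.$$ Then there exists $\lambda\in\mathbb{C}$ with $|\lambda|=1$ such that $\psi=\lambda\varphi$.
   Context: For $\psi=(\psi_0,\ldots,\psi_{N-1})\in\mathbb{C}^N$, $P_\psi(x)=\sum_{j=0}^{N-1}\psi_je^{2i\pi jx}$ for $x\in\mathbb{R}$, and $P_\psi'$ denotes its derivative in $x$. *)

theory Defs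
  imports "HOL-Analysis.Analysis"
begin

text \<open>Vectors in C^N are represented as functions nat => complex; only the
entries with index j < N matter.  P N psi x = sum_{j<N} psi_j e^{2 i pi j x}.\<close>

definition trigP :: "nat \<Rightarrow> (nat \<Rightarrow> complex) \<Rightarrow> real \<Rightarrow> complex" where
  "trigP N \<psi> x = (\<Sum>j<N. \<psi> j * exp (2 * \<i> * of_real pi * of_nat j * of_real x))"

definition trigP' :: "nat \<Rightarrow> (nat \<Rightarrow> complex) \<Rightarrow> real \<Rightarrow> complex" where
  "trigP' N \<psi> x = vector_derivative (trigP N \<psi>) (at x)"

end

theory Submission
  imports Defs "HOL-Computational_Algebra.Polynomial"
begin

text \<open>With \<open>w = e^{2\<pi>ix}\<close>, \<open>P\<^sub>\<phi>(x) = p(w)\<close> and \<open>P\<^sub>\<phi>'(x) = 2\<pi>i (\<theta>p)(w)\<close> for the polynomial \<open>p\<close> with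
  coefficients \<open>\<phi>\<close> and the Euler operator \<open>\<theta> = z d/dz\<close>. On the unit circle \<open>|p(w)|\<^sup>2 = w\<^sup>-\<^sup>M p(w) p\<^sup>*(w)\<close>
  with the conjugate reflection \<open>p\<^sup>*\<close>, and \<open>p p\<^sup>*\<close> has degree \<open>\<le> 2M\<close>, \<open>M = N - 1\<close>; so the \<open>2N - 1\<close> samples
  give the polynomial identities \<open>p p\<^sup>* = q q\<^sup>*\<close> and \<open>(\<theta>p)(\<theta>p)\<^sup>* = (\<theta>q)(\<theta>q)\<^sup>*\<close>. These force the
  Wronskian of \<open>p\<close> and \<open>q\<close> to vanish, hence \<open>q = c p\<close>, and then \<open>|c| = 1\<close>.\<close>

definition poly_of_vec :: "nat \<Rightarrow> (nat \<Rightarrow> 'a::comm_monoid_add) \<Rightarrow> 'a poly" where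
  "poly_of_vec N f = (\<Sum>j<N. monom (f j) j)"

lemma coeff_poly_of_vec: "coeff (poly_of_vec N f) j = (if j < N then f j else 0)"
  unfolding poly_of_vec_def coeff_sum coeff_monom by (auto simp: sum.delta)

lemma degree_poly_of_vec: "degree (poly_of_vec N f) \<le> N - 1"
  by (rule degree_le) (auto simp: coeff_poly_of_vec)

lemma poly_poly_of_vec:
  fixes f :: "nat \<Rightarrow> 'a::comm_semiring_1"
  shows "poly (poly_of_vec N f) z = (\<Sum>j<N. f j * z ^ j)"
  by (simp add: poly_of_vec_def poly_sum poly_monom)

lemma degree_eq_if_wronskian_eq_0:
  fixes f g :: "'a::field_char_0 poly"
  assumes "f \<noteq> 0" "g \<noteq> 0" and W: "pderiv f * g = f * pderiv g"
  shows "degree f = degree g"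
proof (cases "degree f = 0 \<or> degree g = 0")
  case True
  with assms show ?thesis
    by (metis mult_eq_0_iff pderiv_eq_0_iff)
next
  case False
  have "lead_coeff (pderiv f * g) = lead_coeff (f * pderiv g)"
    using W by simp
  then have "of_nat (degree f) * lead_coeff f * lead_coeff g
           = lead_coeff f * (of_nat (degree g) * lead_coeff g)"
    using False by (simp add: lead_coeff_mult degree_pderiv coeff_pderiv)
  then have "(of_nat (degree f) :: 'a) = of_nat (degree g)"
    using assms(1,2) by simp
  then show ?thesis by simp
qed

text \<open>If \<open>g - c f\<close> (with \<open>c\<close> matching leading coefficients) were nonzero, it would again
  have vanishing Wronskian with \<open>f\<close>, hence the degree of \<open>f\<close>, but its coefficient there is 0.\<close>
lemma smult_if_wronskian_eq_0:
  fixes f g :: "'a::field_char_0 poly"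
  assumes f: "f \<noteq> 0" and W: "pderiv f * g = f * pderiv g"
  shows "\<exists>c. g = smult c f"
proof (cases "g = 0")
  case True
  then show ?thesis by (intro exI[of _ 0]) simp
next
  case False
  define c where "c = lead_coeff g / lead_coeff f"
  define h where "h = g - smult c f"
  have "degree g = degree f"
    using degree_eq_if_wronskian_eq_0[OF f False W] by simp
  then have h_top: "coeff h (degree f) = 0"
    using f by (simp add: h_def c_def)
  have "pderiv f * h = f * pderiv h"
    using W by (simp add: h_def pderiv_diff pderiv_smult algebra_simps)
  then have "h = 0"
    using degree_eq_if_wronskian_eq_0[OF f] h_top by force
  then show ?thesis
    unfolding h_def by auto
qed

text \<open>\<open>conj_reflect M p\<close> is \<open>p\<^sup>*(z) = z\<^sup>M cnj (p (1 / cnj z))\<close> for \<open>deg p \<le> M\<close>.\<close>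
definition conj_reflect :: "nat \<Rightarrow> complex poly \<Rightarrow> complex poly" where
  "conj_reflect M p = (\<Sum>j\<le>M. monom (cnj (coeff p j)) (M - j))"

lemma coeff_conj_reflect:
  "coeff (conj_reflect M p) i = (if i \<le> M then cnj (coeff p (M - i)) else 0)"
proof -
  have "coeff (conj_reflect M p) i = (\<Sum>j\<le>M. if j = M - i \<and> i \<le> M then cnj (coeff p j) else 0)"
    unfolding conj_reflect_def coeff_sum coeff_monom by (rule sum.cong) auto
  then show ?thesis
    by (simp add: sum.delta)
qed

lemma degree_conj_reflect: "degree (conj_reflect M p) \<le> M"
  by (rule degree_le) (simp add: coeff_conj_reflect)

lemma conj_reflect_smult: "conj_reflect M (smult c p) = smult (cnj c) (conj_reflect M p)"
  by (rule poly_eqI) (simp add: coeff_conj_reflect)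

lemma conj_reflect_eq_0_iff:
  assumes "degree p \<le> M"
  shows "conj_reflect M p = 0 \<longleftrightarrow> p = 0"
proof
  assume "conj_reflect M p = 0"
  then have "coeff p n = 0" if "n \<le> M" for n
    using that coeff_conj_reflect[of M p "M - n"] by simp
  with assms show "p = 0"
    by (metis coeff_eq_0 leI leading_coeff_0_iff order.refl)
qed (simp add: conj_reflect_def)

lemma poly_conj_reflect:
  assumes "degree p \<le> M" and "cmod w = 1"
  shows "poly (conj_reflect M p) w = w ^ M * cnj (poly p w)"
proof -
  have w_cnj: "w * cnj w = 1"
    using assms(2) complex_norm_square[of w] by simp
  have "poly (conj_reflect M p) w = (\<Sum>j\<le>M. cnj (coeff p j) * w ^ (M - j))"
    unfolding conj_reflect_def poly_sum poly_monom ..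
  also have "\<dots> = (\<Sum>j\<le>M. w ^ M * (cnj (coeff p j) * cnj w ^ j))"
  proof (rule sum.cong)
    fix j assume "j \<in> {..M}"
    then have "w ^ M * cnj w ^ j = w ^ (M - j) * (w * cnj w) ^ j"
      by (simp add: power_mult_distrib flip: power_add)
    then show "cnj (coeff p j) * w ^ (M - j) = w ^ M * (cnj (coeff p j) * cnj w ^ j)"
      using w_cnj by simp
  qed simp
  also have "\<dots> = w ^ M * cnj (poly (\<Sum>j\<le>M. monom (coeff p j) j) w)"
    by (simp add: poly_sum poly_monom sum_distrib_left)
  also have "\<dots> = w ^ M * cnj (poly p w)"
    by (simp only: poly_as_sum_of_monoms'[OF assms(1)])
  finally show ?thesis .
qed

lemma poly_mult_conj_reflect:
  assumes "degree p \<le> M" and "cmod w = 1"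
  shows "poly (p * conj_reflect M p) w = w ^ M * of_real ((cmod (poly p w))\<^sup>2)"
  unfolding poly_mult poly_conj_reflect[OF assms] complex_norm_square by (simp add: mult_ac)

lemma degree_mult_conj_reflect:
  assumes "degree p \<le> M"
  shows "degree (p * conj_reflect M p) \<le> 2 * M"
  using degree_mult_le[of p "conj_reflect M p"] degree_conj_reflect[of M p] assms by linarith

definition euler_op :: "'a::{comm_semiring_1,semiring_no_zero_divisors} poly \<Rightarrow> 'a poly" where
  "euler_op p = pCons 0 (pderiv p)"

lemma coeff_euler_op: "coeff (euler_op p) i = of_nat i * coeff p i"
  by (cases i) (simp_all add: euler_op_def coeff_pderiv)

lemma euler_op_eq_X_mult_pderiv: "euler_op p = [:0, 1:] * pderiv p"
  by (simp add: euler_op_def)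

lemma euler_op_mult: "euler_op (p * q) = euler_op p * q + p * euler_op q"
  by (simp add: euler_op_eq_X_mult_pderiv pderiv_mult algebra_simps)

lemma euler_op_monom: "euler_op (monom a n) = smult (of_nat n) (monom a n)"
  by (rule poly_eqI) (simp add: coeff_euler_op coeff_monom)

lemma euler_op_eq_0_if_degree_0: "degree p = 0 \<Longrightarrow> euler_op p = 0"
  by (elim degree_eq_zeroE) (simp add: euler_op_def pderiv_pCons)

lemma euler_op_poly_of_vec:
  "euler_op (poly_of_vec N f) = poly_of_vec N (\<lambda>j. of_nat j * f j)"
  by (rule poly_eqI) (simp add: coeff_euler_op coeff_poly_of_vec)

lemma euler_op_conj_reflect:
  "euler_op (conj_reflect M p) = smult (of_nat M) (conj_reflect M p) - conj_reflect M (euler_op p)"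
  by (rule poly_eqI) (auto simp: coeff_euler_op coeff_conj_reflect of_nat_diff algebra_simps)

lemma smult_if_euler_wronskian_eq_0:
  fixes f g :: "'a::field_char_0 poly"
  assumes "f \<noteq> 0" and "euler_op f * g = f * euler_op g"
  shows "\<exists>c. g = smult c f"
proof -
  have "[:0, 1:] * (pderiv f * g - f * pderiv g) = 0"
    using assms(2) by (simp add: euler_op_eq_X_mult_pderiv algebra_simps)
  then have "pderiv f * g = f * pderiv g"
    by simp
  with assms(1) show ?thesis
    by (rule smult_if_wronskian_eq_0)
qed

lemma euler_op_mult_conj_reflect:
  "euler_op (p * conj_reflect M p) = smult (of_nat M) (p * conj_reflect M p)
     + (euler_op p * conj_reflect M p - p * conj_reflect M (euler_op p))"
  by (simp add: euler_op_mult euler_op_conj_reflect algebra_simps)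

text \<open>The relation makes \<open>monom 1 M * q\<close> and \<open>conj_reflect M p\<close> have vanishing Wronskian,
  so \<open>monom 1 M * q\<close> has degree at most \<open>M\<close>.\<close>
lemma degree_eq_0_if_conj_reflect_euler_antirelation:
  assumes p: "degree p \<le> M" "p \<noteq> 0" and q: "q \<noteq> 0"
    and rel: "conj_reflect M (euler_op p) * q = - euler_op q * conj_reflect M p"
  shows "degree q = 0"
proof -
  define g where "g = monom 1 M * q"
  have "monom 1 M * (conj_reflect M (euler_op p) * q + euler_op q * conj_reflect M p) = 0"
    using rel by simp
  then have "euler_op (conj_reflect M p) * g = conj_reflect M p * euler_op g"
    by (simp add: g_def euler_op_mult euler_op_conj_reflect euler_op_monom algebra_simps)
  moreover have "conj_reflect M p \<noteq> 0"
    using p conj_reflect_eq_0_iff by blast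
  ultimately obtain c where "g = smult c (conj_reflect M p)"
    using smult_if_euler_wronskian_eq_0 by blast
  then have "degree g \<le> M"
    using degree_smult_le[of c "conj_reflect M p"] degree_conj_reflect[of M p] by simp
  moreover have "degree g = M + degree q"
    using q by (simp add: g_def degree_mult_eq degree_monom_eq)
  ultimately show ?thesis
    by simp
qed

text \<open>Differentiating the first identity gives \<open>r p\<^sup>* - p r\<^sup>* = s q\<^sup>* - q s\<^sup>*\<close>
  (with \<open>r = \<theta>p\<close>, \<open>s = \<theta>q\<close>); together with the second one this determines
  \<open>r p\<^sup>* + p r\<^sup>*\<close> up to sign. Either sign forces the Wronskian of \<open>p\<close> and \<open>q\<close> to vanish.\<close>
lemma smult_if_mult_conj_reflect_eq:
  assumes dp: "degree p \<le> M" and dq: "degree q \<le> M" and p: "p \<noteq> 0"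
    and eq: "p * conj_reflect M p = q * conj_reflect M q"
    and eq_euler: "euler_op p * conj_reflect M (euler_op p) = euler_op q * conj_reflect M (euler_op q)"
  shows "\<exists>c. q = smult c p"
proof -
  define r s where "r = euler_op p" and "s = euler_op q"
  define Tp Tq Tr Ts where "Tp = conj_reflect M p" and "Tq = conj_reflect M q"
    and "Tr = conj_reflect M r" and "Ts = conj_reflect M s"
  have E1: "p * Tp = q * Tq" and E2: "r * Tr = s * Ts"
    using eq eq_euler by (simp_all add: Tp_def Tq_def Tr_def Ts_def r_def s_def)
  have "smult (of_nat M) (p * Tp) + (r * Tp - p * Tr) = smult (of_nat M) (q * Tq) + (s * Tq - q * Ts)"
    using arg_cong[OF eq, of euler_op]
    unfolding euler_op_mult_conj_reflect Tp_def Tq_def Tr_def Ts_def r_def s_def .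
  then have E3: "r * Tp - p * Tr = s * Tq - q * Ts"
    using E1 by simp
  have Tp: "Tp \<noteq> 0"
    using dp p conj_reflect_eq_0_iff by (simp add: Tp_def)
  have q: "q \<noteq> 0"
    using E1 Tp p by auto
  have "(r * Tp + p * Tr - (s * Tq + q * Ts)) * (r * Tp + p * Tr + (s * Tq + q * Ts)) = 0"
    using E1 E2 E3 by algebra
  then consider "r * Tp + p * Tr = s * Tq + q * Ts" | "r * Tp + p * Tr = - (s * Tq + q * Ts)"
    by (metis eq_neg_iff_add_eq_0 mult_eq_0_iff right_minus_eq)
  then have "r * q = s * p"
  proof cases
    case 1
    then have "r * Tp = s * Tq"
      using E3 by algebra
    then have "Tp * (r * q - s * p) = 0"
      using E1 by algebra
    then show ?thesis
      using Tp by simp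
  next
    case 2
    have "p * Tr = - s * Tq" and "r * Tp = - q * Ts"
      using 2 E3 by algebra+
    then have "p * (Tr * q + s * Tp) = 0" and "q * (Ts * p + r * Tq) = 0"
      using E1 by algebra+
    then have "Tr * q = - s * Tp" and "Ts * p = - r * Tq"
      using p q by (simp_all add: eq_neg_iff_add_eq_0)
    then have "degree q = 0" and "degree p = 0"
      using degree_eq_0_if_conj_reflect_euler_antirelation[OF dp p q]
        degree_eq_0_if_conj_reflect_euler_antirelation[OF dq q p]
      by (simp_all add: Tp_def Tq_def Tr_def Ts_def r_def s_def)
    then show ?thesis
      by (simp add: r_def s_def euler_op_eq_0_if_degree_0)
  qed
  then show ?thesis
    using smult_if_euler_wronskian_eq_0[OF p] by (simp add: r_def s_def mult.commute)
qed

lemma unimodular_smult_if_mult_conj_reflect_eq: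
  assumes "degree p \<le> M" and "degree q \<le> M"
    and eq: "p * conj_reflect M p = q * conj_reflect M q"
    and "euler_op p * conj_reflect M (euler_op p) = euler_op q * conj_reflect M (euler_op q)"
  shows "\<exists>c. cmod c = 1 \<and> q = smult c p"
proof (cases "p = 0")
  case True
  then have "q = 0"
    using eq conj_reflect_eq_0_iff[OF assms(2)] by auto
  with True show ?thesis
    by (intro exI[of _ 1]) simp
next
  case False
  then obtain c where c: "q = smult c p"
    using smult_if_mult_conj_reflect_eq assms by blast
  have "p * conj_reflect M p \<noteq> 0"
    using False conj_reflect_eq_0_iff[OF assms(1)] by simp
  moreover have "p * conj_reflect M p = smult (c * cnj c) (p * conj_reflect M p)"
    using eq by (simp add: c conj_reflect_smult mult_ac)
  then have "smult (1 - c * cnj c) (p * conj_reflect M p) = 0"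
    by (metis diff_self smult_1_left smult_diff_left)
  ultimately have "c * cnj c = 1"
    by simp
  then have "(cmod c)\<^sup>2 = 1"
    by (metis complex_norm_square of_real_eq_1_iff)
  then have "cmod c = 1"
    using norm_ge_zero[of c] by (auto simp: power2_eq_1_iff)
  with c show ?thesis
    by blast
qed

lemma exp_eq_cis_power: "exp (2 * \<i> * of_real pi * of_nat j * of_real x) = cis (2 * pi * x) ^ j"
proof -
  have "2 * \<i> * of_real pi * of_nat j * of_real x = of_nat j * (\<i> * of_real (2 * pi * x))"
    by simp
  then show ?thesis
    by (simp only: exp_of_nat_mult cis_conv_exp)
qed

lemma trigP_eq_poly: "trigP N f x = poly (poly_of_vec N f) (cis (2 * pi * x))"
  unfolding trigP_def poly_poly_of_vec exp_eq_cis_power ..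

lemma trigP'_eq_poly:
  "trigP' N f x = 2 * \<i> * of_real pi * poly (euler_op (poly_of_vec N f)) (cis (2 * pi * x))"
proof -
  define g where "g z = (\<Sum>j<N. f j * exp (2 * \<i> * of_real pi * of_nat j * z))" for z
  define g' where "g' z = (\<Sum>j<N. f j * (2 * \<i> * of_real pi * of_nat j) * exp (2 * \<i> * of_real pi * of_nat j * z))" for z
  have "(g has_field_derivative g' z) (at z)" for z
    unfolding g_def g'_def by (auto intro!: derivative_eq_intros sum.cong simp: mult_ac)
  moreover have "trigP N f = (\<lambda>x. g (of_real x))"
    by (simp add: trigP_def g_def fun_eq_iff)
  ultimately have "(trigP N f has_vector_derivative g' (of_real x)) (at x)"
    using has_vector_derivative_real_field by metis
  then have "trigP' N f x = g' (of_real x)"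
    unfolding trigP'_def by (rule vector_derivative_at)
  also have "\<dots> = 2 * \<i> * of_real pi * (\<Sum>j<N. of_nat j * f j * cis (2 * pi * x) ^ j)"
    unfolding g'_def exp_eq_cis_power sum_distrib_left by (simp add: mult_ac)
  finally show ?thesis
    by (simp add: euler_op_poly_of_vec poly_poly_of_vec)
qed

lemma cis_2pi_mult_inj_on: "inj_on (\<lambda>x. cis (2 * pi * x)) {0..<1}"
proof (rule inj_onI)
  fix a b :: real
  assume ab: "a \<in> {0..<1}" "b \<in> {0..<1}" and "cis (2 * pi * a) = cis (2 * pi * b)"
  then obtain n :: int where "\<i> * (2 * pi * a) = \<i> * (2 * pi * b) + (of_int (2 * n) * pi) * \<i>"
    unfolding cis_conv_exp exp_eq by blast
  then have "pi * (a - b - n) = 0"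
    by (simp add: complex_eq_iff algebra_simps)
  then have "a = b + n"
    by simp
  with ab have "n = 0"
    by auto
  with \<open>a = b + n\<close> show "a = b"
    by simp
qed

lemma poly_eq_if_eq_on_roots_of_unity:
  fixes P Q :: "complex poly"
  assumes "degree P \<le> n" "degree Q \<le> n"
    and "\<And>k. k \<le> n \<Longrightarrow> poly P (cis (2 * pi * (real k / real (n + 1)))) = poly Q (cis (2 * pi * (real k / real (n + 1))))"
  shows "P = Q"
proof -
  define w where "w k = cis (2 * pi * (real k / real (n + 1)))" for k :: nat
  have "inj_on (\<lambda>k. real k / real (n + 1)) {..n}"
    by (rule inj_onI) (simp add: divide_simps)
  moreover have "(\<lambda>k. real k / real (n + 1)) ` {..n} \<subseteq> {0..<1}"
    by (auto simp: divide_simps)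
  ultimately have "inj_on w {..n}"
    unfolding w_def using cis_2pi_mult_inj_on comp_inj_on inj_on_subset
    by (metis (no_types, lifting) comp_apply inj_on_cong)
  then have "card (w ` {..n}) = n + 1"
    by (simp add: card_image)
  then show ?thesis
    using assms by (intro poly_eqI_degree[of "w ` {..n}"]) (auto simp: w_def)
qed

lemma mult_conj_reflect_eq_if_cmod_eq:
  assumes dp: "degree p \<le> M" and dq: "degree q \<le> M"
    and "\<And>k. k \<le> 2 * M \<Longrightarrow>
      cmod (poly p (cis (2 * pi * (real k / real (2 * M + 1))))) = cmod (poly q (cis (2 * pi * (real k / real (2 * M + 1)))))"
  shows "p * conj_reflect M p = q * conj_reflect M q"
proof (rule poly_eq_if_eq_on_roots_of_unity[where n = "2 * M"])
  fix k :: nat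
  assume "k \<le> 2 * M"
  with assms(3) show "poly (p * conj_reflect M p) (cis (2 * pi * (real k / real (2 * M + 1))))
    = poly (q * conj_reflect M q) (cis (2 * pi * (real k / real (2 * M + 1))))"
    by (simp add: poly_mult_conj_reflect[OF dp norm_cis] poly_mult_conj_reflect[OF dq norm_cis]
        del: poly_mult)
qed (use dp dq degree_mult_conj_reflect in auto)

theorem mainTheorem9:
  fixes N :: nat and \<phi> \<psi> :: "nat \<Rightarrow> complex"
  assumes "N \<ge> 1"
    and "\<And>k. k \<le> 2 * N - 2 \<Longrightarrow>
           cmod (trigP N \<phi> (real k / real (2 * N - 1))) = cmod (trigP N \<psi> (real k / real (2 * N - 1)))"
    and "\<And>k. k \<le> 2 * N - 2 \<Longrightarrow>
           cmod (trigP' N \<phi> (real k / real (2 * N - 1))) = cmod (trigP' N \<psi> (real k / real (2 * N - 1)))"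
  shows "\<exists>c::complex. cmod c = 1 \<and> (\<forall>j<N. \<psi> j = c * \<phi> j)"
proof -
  define M where "M = N - 1"
  have nodes: "2 * N - 2 = 2 * M" "2 * N - 1 = 2 * M + 1"
    using assms(1) by (simp_all add: M_def)
  define p q where "p = poly_of_vec N \<phi>" and "q = poly_of_vec N \<psi>"
  have deg: "degree p \<le> M" "degree q \<le> M" "degree (euler_op p) \<le> M" "degree (euler_op q) \<le> M"
    unfolding p_def q_def M_def euler_op_poly_of_vec by (rule degree_poly_of_vec)+
  have "p * conj_reflect M p = q * conj_reflect M q"
    using deg assms(2)[unfolded nodes]
    by (intro mult_conj_reflect_eq_if_cmod_eq) (simp_all add: trigP_eq_poly p_def q_def)
  moreover have "euler_op p * conj_reflect M (euler_op p) = euler_op q * conj_reflect M (euler_op q)"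
    using deg assms(3)[unfolded nodes]
    by (intro mult_conj_reflect_eq_if_cmod_eq) (simp_all add: trigP'_eq_poly p_def q_def norm_mult)
  ultimately obtain c where c: "cmod c = 1" "q = smult c p"
    using unimodular_smult_if_mult_conj_reflect_eq deg by blast
  have "\<psi> j = c * \<phi> j" if "j < N" for j
    using arg_cong[OF c(2), of "\<lambda>h. coeff h j"] that by (simp add: p_def q_def coeff_poly_of_vec)
  with c(1) show ?thesis
    by blast
qed

end
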